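(* Let $d\ge2$, $0<\eta\le\frac{1}{2d}$ and $\gamma=\eta d$, and consider one round $t$ of the Bandit-PCA Online Mirror Descent algorithm with sparse sampling, where $\boldsymbol{W}_t$ is a positive definite density matrix and $\boldsymbol{L}_t$ is symmetric with spectral norm at most $1$. Then $\boldsymbol{W}_t^{-1}+\eta\widetilde{\boldsymbol{L}}_t$ is positive definite and, with $\widetilde{\boldsymbol{W}}_{t+1}=(\boldsymbol{W}_t^{-1}+\eta\widetilde{\boldsymbol{L}}_t)^{-1}$, \[ \mathbb{E}_t\big[\langle\boldsymbol{W}_t-\widetilde{\boldsymbol{W}}_{t+1},\widetilde{\boldsymbol{L}}_t\rangle\big]\le8\eta d\,\|\boldsymbol{L}_t\|_F^2, \] where $\mathbb{E}_t$ is expectation over the round-$t$ sampling randomness given $\boldsymbol{W}_t$ and $\boldsymbol{L}_t$.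
   Context: Notation: $\langle \boldsymbol{A},\boldsymbol{B}\rangle=\mathrm{tr}(\boldsymbol{A}^\top \boldsymbol{B})$; $\|\cdot\|_F$ Frobenius norm; a density matrix is a symmetric positive semidefinite matrix of trace $1$. Sparse sampling at round $t$: write $\boldsymbol{W}_t=\sum_i\mu_i\boldsymbol{u}_i\boldsymbol{u}_i^\top$ (eigendecomposition, orthonormal $\boldsymbol{u}_i$) and $\lambda_i=(1-\gamma)\mu_i+\gamma/d$. Draw $I,J$ independently with $\Pr(I=i)=\Pr(J=i)=\lambda_i$. If $I=J$: $\boldsymbol{w}_t=\boldsymbol{u}_I$ and $\widetilde{\boldsymbol{L}}_t=(\ell_t/\lambda_I^2)\boldsymbol{u}_I\boldsymbol{u}_I^\top$. If $I\ne J$: draw a uniform sign $s\in\{-1,1\}$, $\boldsymbol{w}_t=(\boldsymbol{u}_I+s\boldsymbol{u}_J)/\sqrt2$ and $\widetilde{\boldsymbol{L}}_t=\frac{s\ell_t}{2\lambda_I\lambda_J}(\boldsymbol{u}_I\boldsymbol{u}_J^\top+\boldsymbol{u}_J\boldsymbol{u}_I^\top)$. Here $\ell_t=\boldsymbol{w}_t^\top\boldsymbol{L}_t\boldsymbol{w}_t$. *)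

theory Defs
  imports "HOL-Analysis.Analysis"
begin

(* Matrices are real^'n^'n with 'n a finite index type, d = CARD('n). *)

definition outer :: "real^'n \<Rightarrow> real^'n \<Rightarrow> real^'n^'n" where
  "outer u v = (\<chi> i j. u $ i * v $ j)"

definition sym_mat :: "real^'n^'n \<Rightarrow> bool" where
  "sym_mat A \<longleftrightarrow> transpose A = A"

definition pos_def :: "real^'n^'n \<Rightarrow> bool" where
  "pos_def A \<longleftrightarrow> sym_mat A \<and> (\<forall>x. x \<noteq> 0 \<longrightarrow> x \<bullet> (A *v x) > 0)"

definition frob_inner :: "real^'n^'n \<Rightarrow> real^'n^'n \<Rightarrow> real" where
  "frob_inner A B = trace (transpose A ** B)"

definition frob_norm :: "real^'n^'n \<Rightarrow> real" where
  "frob_norm A = sqrt (frob_inner A A)"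

definition spec_norm :: "real^'n^'n \<Rightarrow> real" where
  "spec_norm A = onorm (\<lambda>x. A *v x)"

(* sampling probabilities lambda_i = (1-gamma) mu_i + gamma/d with gamma = eta d *)
definition samp_prob :: "real \<Rightarrow> ('n::finite \<Rightarrow> real) \<Rightarrow> 'n \<Rightarrow> real" where
  "samp_prob eta mu i = (1 - eta * real CARD('n)) * mu i + eta * real CARD('n) / real CARD('n)"

definition sparse_w :: "('n \<Rightarrow> real^'n) \<Rightarrow> 'n \<Rightarrow> 'n \<Rightarrow> real \<Rightarrow> real^'n" where
  "sparse_w u I J s = (if I = J then u I else (1 / sqrt 2) *\<^sub>R (u I + s *\<^sub>R u J))"

definition sparse_Lt :: "('n \<Rightarrow> real^'n) \<Rightarrow> ('n \<Rightarrow> real) \<Rightarrow> real^'n^'n \<Rightarrow> 'n \<Rightarrow> 'n \<Rightarrow> real \<Rightarrow> real^'n^'n" where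
  "sparse_Lt u lam L I J s =
     (let w = sparse_w u I J s; l = w \<bullet> (L *v w) in
      if I = J then (l / (lam I)^2) *\<^sub>R outer (u I) (u I)
      else (s * l / (2 * lam I * lam J)) *\<^sub>R (outer (u I) (u J) + outer (u J) (u I)))"

(* expectation over I, J independent with law lam, and a uniform sign s when I \<noteq> J *)
definition sparse_expect :: "('n::finite \<Rightarrow> real) \<Rightarrow> ('n \<Rightarrow> 'n \<Rightarrow> real \<Rightarrow> real) \<Rightarrow> real" where
  "sparse_expect lam f = (\<Sum>I\<in>UNIV. \<Sum>J\<in>UNIV. lam I * lam J *
      (if I = J then f I J 1 else (f I J 1 + f I J (-1)) / 2))"

end

theory Submission
  imports Defs
begin

text \<open>
  Conjugation by the orthogonal matrix whose columns are the eigenvectors \<open>u\<^sub>i\<close> of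
  \<open>W\<^sub>t\<close> preserves products, inverses, Frobenius products and positive definiteness, so
  the whole round can be computed in eigencoordinates. There \<open>W\<^sub>t\<close> is \<open>diag \<mu>\<close> and the
  estimator \<open>\<tilde>L\<^sub>t\<close> is a multiple of the matrix unit \<open>E\<^sub>I\<^sub>I\<close> (if \<open>I = J\<close>) or of
  \<open>E\<^sub>I\<^sub>J + E\<^sub>J\<^sub>I\<close> (if \<open>I \<noteq> J\<close>), so \<open>W\<^sub>t\<^sup>-\<^sup>1 + \<eta> \<tilde>L\<^sub>t\<close> is a rank-one resp. 2\<times>2-block
  perturbation of \<open>diag (1/\<mu>)\<close> with an explicit inverse. Since \<open>\<gamma> = \<eta> d \<le> 1/2\<close>, the
  sampling probabilities satisfy \<open>\<mu>\<^sub>i \<le> 2\<lambda>\<^sub>i\<close> and \<open>2\<eta>\<mu>\<^sub>i \<le> \<lambda>\<^sub>i\<^sup>2\<close>; this keeps the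
  perturbation small enough for positivity and bounds the weighted gap of each outcome by
  \<open>8\<eta>\<ell>\<^sub>t\<^sup>2\<close> resp. \<open>4\<eta>\<ell>\<^sub>t\<^sup>2\<close>. Averaging over the sign and summing over \<open>(I, J)\<close> against
  \<open>\<lambda>\<^sub>I \<lambda>\<^sub>J\<close> gives \<open>8\<eta>d \<parallel>L\<^sub>t\<parallel>\<^sub>F\<^sup>2\<close>, because the loss coordinates \<open>u\<^sub>i \<bullet> L u\<^sub>j\<close>
  have square sum \<open>\<parallel>L\<^sub>t\<parallel>\<^sub>F\<^sup>2\<close>.
\<close>

section \<open>Conjugation by an orthogonal matrix\<close>

lemma matrix_inv_unique:
  fixes A B :: "real^'n^'n"
  assumes "A ** B = mat 1"
  shows "matrix_inv A = B"
  unfolding matrix_inv_def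
proof (rule some_equality)
  show "A ** B = mat 1 \<and> B ** A = mat 1"
    using assms matrix_left_right_inverse by blast
next
  fix C assume "A ** C = mat 1 \<and> C ** A = mat 1"
  then have "C = (C ** A) ** B" using assms by (metis matrix_mul_assoc matrix_mul_rid)
  then show "C = B" using \<open>A ** C = mat 1 \<and> C ** A = mat 1\<close> by simp
qed

lemma matrix_add_rdistrib: "(B + C) ** A = B ** A + C ** A" for A B C :: "real^'n^'n"
  by (simp add: matrix_matrix_mult_def vec_eq_iff sum.distrib algebra_simps)

lemma matrix_diff_ldistrib: "A ** (B - C) = A ** B - A ** C" for A B C :: "real^'n^'n"
  by (simp add: matrix_matrix_mult_def vec_eq_iff sum_subtractf algebra_simps)

lemma matrix_diff_rdistrib: "(B - C) ** A = B ** A - C ** A" for A B C :: "real^'n^'n"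
  by (simp add: matrix_matrix_mult_def vec_eq_iff sum_subtractf algebra_simps)

lemma frob_inner_eq_sum:
  "frob_inner A B = (\<Sum>i\<in>UNIV. \<Sum>j\<in>UNIV. A $ i $ j * B $ i $ j)"
proof -
  have "frob_inner A B = (\<Sum>j\<in>UNIV. \<Sum>i\<in>UNIV. A $ i $ j * B $ i $ j)"
    unfolding frob_inner_def trace_def matrix_matrix_mult_def transpose_def by simp
  also have "\<dots> = (\<Sum>i\<in>UNIV. \<Sum>j\<in>UNIV. A $ i $ j * B $ i $ j)"
    by (rule sum.swap)
  finally show ?thesis .
qed

lemma frob_inner_add_right: "frob_inner A (B + C) = frob_inner A B + frob_inner A C"
  by (simp add: frob_inner_eq_sum algebra_simps sum.distrib)

lemma frob_inner_scaleR_right: "frob_inner A (c *\<^sub>R B) = c * frob_inner A B"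
  by (simp add: frob_inner_eq_sum sum_distrib_left algebra_simps)

lemma frob_norm_square: "(frob_norm A)^2 = (\<Sum>i\<in>UNIV. \<Sum>j\<in>UNIV. (A $ i $ j)^2)"
proof -
  have "frob_inner A A = (\<Sum>i\<in>UNIV. \<Sum>j\<in>UNIV. (A $ i $ j)^2)"
    by (simp add: frob_inner_eq_sum power2_eq_square)
  moreover have "0 \<le> (\<Sum>i\<in>UNIV. \<Sum>j\<in>UNIV. (A $ i $ j)^2)"
    by (intro sum_nonneg) simp
  ultimately show ?thesis by (simp add: frob_norm_def)
qed

definition orth_conj :: "real^'n^'n \<Rightarrow> real^'n^'n \<Rightarrow> real^'n^'n" where
  "orth_conj Q A = Q ** A ** transpose Q"

lemma orth_conj_add: "orth_conj Q (A + B) = orth_conj Q A + orth_conj Q B"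
  by (simp add: orth_conj_def matrix_add_ldistrib matrix_add_rdistrib)

lemma orth_conj_diff: "orth_conj Q (A - B) = orth_conj Q A - orth_conj Q B"
  by (simp add: orth_conj_def matrix_diff_ldistrib matrix_diff_rdistrib)

lemma orth_conj_scaleR: "orth_conj Q (c *\<^sub>R A) = c *\<^sub>R orth_conj Q A"
  by (simp add: orth_conj_def matrix_scalar_ac scalar_matrix_assoc)

lemma transpose_orth_conj: "transpose (orth_conj Q A) = orth_conj Q (transpose A)"
  by (simp add: orth_conj_def matrix_transpose_mul matrix_mul_assoc)

lemma quadratic_form_orth_conj:
  "x \<bullet> (orth_conj Q A *v x) = (transpose Q *v x) \<bullet> (A *v (transpose Q *v x))"
proof -
  have "orth_conj Q A *v x = Q *v (A *v (transpose Q *v x))"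
    by (simp add: orth_conj_def matrix_vector_mul_assoc matrix_mul_assoc
        del: transpose_matrix_vector)
  then show ?thesis by (simp add: dot_lmul_matrix[symmetric])
qed

context
  fixes Q :: "real^'n^'n"
  assumes Q: "orthogonal_matrix Q"
begin

lemma orthogonal_cancel:
  "X ** transpose Q ** Q = X" "X ** Q ** transpose Q = X" "Q ** transpose Q ** X = X"
  using Q unfolding orthogonal_matrix_def by (simp_all add: matrix_mul_assoc[symmetric])

lemma orth_conj_mult: "orth_conj Q (A ** B) = orth_conj Q A ** orth_conj Q B"
  by (simp add: orth_conj_def matrix_mul_assoc orthogonal_cancel)

lemma orth_conj_mat_1: "orth_conj Q (mat 1) = mat 1"
  using Q by (simp add: orthogonal_matrix_def orth_conj_def)

lemma orth_conj_transpose_cancel: "orth_conj Q (orth_conj (transpose Q) A) = A"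
  using Q by (simp add: orth_conj_def matrix_mul_assoc orthogonal_cancel)

lemma matrix_inv_orth_conj:
  assumes "A ** B = mat 1"
  shows "matrix_inv (orth_conj Q A) = orth_conj Q B"
  by (rule matrix_inv_unique) (simp add: orth_conj_mult[symmetric] assms orth_conj_mat_1)

lemma trace_orth_conj: "trace (orth_conj Q A) = trace A"
proof -
  have "trace (orth_conj Q A) = trace (Q ** (A ** transpose Q))"
    by (simp add: orth_conj_def matrix_mul_assoc)
  also have "\<dots> = trace (A ** transpose Q ** Q)"
    by (rule trace_mul_sym)
  also have "\<dots> = trace A"
    by (simp add: orthogonal_cancel)
  finally show ?thesis .
qed

lemma frob_inner_orth_conj: "frob_inner (orth_conj Q A) (orth_conj Q B) = frob_inner A B"
  by (simp add: frob_inner_def transpose_orth_conj orth_conj_mult[symmetric] trace_orth_conj)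

lemma frob_norm_orth_conj: "frob_norm (orth_conj Q A) = frob_norm A"
  by (simp add: frob_norm_def frob_inner_orth_conj)

lemma pos_def_orth_conj:
  assumes "pos_def A"
  shows "pos_def (orth_conj Q A)"
  unfolding pos_def_def
proof (intro conjI allI impI)
  show "sym_mat (orth_conj Q A)"
    using assms by (simp add: pos_def_def sym_mat_def transpose_orth_conj)
next
  fix x :: "real^'n" assume "x \<noteq> 0"
  have "Q *v (transpose Q *v x) = x"
    using Q unfolding orthogonal_matrix_def
    by (simp add: matrix_vector_mul_assoc del: transpose_matrix_vector)
  then have "transpose Q *v x \<noteq> 0" using \<open>x \<noteq> 0\<close> by (metis matrix_vector_mult_0_right)
  then have "0 < (transpose Q *v x) \<bullet> (A *v (transpose Q *v x))"
    using assms unfolding pos_def_def by blast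
  then show "0 < x \<bullet> (orth_conj Q A *v x)"
    by (simp only: quadratic_form_orth_conj)
qed

end

lemma pos_def_orth_conj_iff:
  assumes Q: "orthogonal_matrix Q"
  shows "pos_def (orth_conj Q A) \<longleftrightarrow> pos_def A"
proof
  assume "pos_def (orth_conj Q A)"
  then have "pos_def (orth_conj (transpose Q) (orth_conj Q A))"
    by (rule pos_def_orth_conj[of "transpose Q", simplified, OF Q])
  then show "pos_def A"
    using orth_conj_transpose_cancel[of "transpose Q", simplified, OF Q] by simp
qed (rule pos_def_orth_conj[OF Q])

definition round_gap :: "real^'n^'n \<Rightarrow> real \<Rightarrow> real^'n^'n \<Rightarrow> real" where
  "round_gap W eta Lt = frob_inner (W - matrix_inv (matrix_inv W + eta *\<^sub>R Lt)) Lt"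

lemma orth_conj_inverse_update:
  assumes Q: "orthogonal_matrix Q" and "M ** P = mat 1"
  shows "matrix_inv (orth_conj Q M) + c *\<^sub>R orth_conj Q N = orth_conj Q (P + c *\<^sub>R N)"
  by (simp add: matrix_inv_orth_conj[OF Q assms(2)] orth_conj_add orth_conj_scaleR)

lemma round_gap_orth_conj:
  assumes Q: "orthogonal_matrix Q" and "M ** P = mat 1" and "(P + c *\<^sub>R N) ** B = mat 1"
  shows "round_gap (orth_conj Q M) c (orth_conj Q N) = frob_inner (M - B) N"
  by (simp add: round_gap_def orth_conj_inverse_update[OF assms(1,2)]
      matrix_inv_orth_conj[OF Q assms(3)] orth_conj_diff[symmetric] frob_inner_orth_conj[OF Q])

section \<open>Diagonal matrices and matrix units\<close>

definition diag_mat :: "('n::finite \<Rightarrow> real) \<Rightarrow> real^'n^'n" where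
  "diag_mat f = (\<chi> i j. if i = j then f i else 0)"

definition mat_unit :: "'n::finite \<Rightarrow> 'n \<Rightarrow> real^'n^'n" where
  "mat_unit i j = (\<chi> a b. if a = i \<and> b = j then 1 else 0)"

definition sym_unit :: "'n::finite \<Rightarrow> 'n \<Rightarrow> real^'n^'n" where
  "sym_unit i j = mat_unit i j + mat_unit j i"

lemma mult_if_zero:
  "(if P then a else 0) * b = (if P then a * b else (0::real))"
  "b * (if P then a else 0) = (if P then b * a else (0::real))"
  by simp_all

lemma sum_if_eq_conj:
  "(\<Sum>k\<in>(UNIV::'n::finite set). if k = i \<and> P then F k else 0) = (if P then F i else (0::real))"
  "(\<Sum>k\<in>(UNIV::'n::finite set). if P \<and> k = i then F k else 0) = (if P then F i else (0::real))"
  by (cases P; simp)+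

lemma diag_mat_mult: "diag_mat f ** diag_mat g = diag_mat (\<lambda>i. f i * g i)"
  by (simp add: diag_mat_def matrix_matrix_mult_def vec_eq_iff mult_if_zero sum_if_eq_conj)

lemma diag_mat_mult_inverse:
  assumes "\<And>i. f i \<noteq> 0"
  shows "diag_mat f ** diag_mat (\<lambda>i. 1 / f i) = mat 1"
  unfolding diag_mat_mult using assms by (simp add: diag_mat_def mat_def)

lemma diag_mat_mult_unit: "diag_mat f ** mat_unit i j = f i *\<^sub>R mat_unit i j"
  by (simp add: diag_mat_def mat_unit_def matrix_matrix_mult_def vec_eq_iff
      mult_if_zero sum_if_eq_conj)

lemma mat_unit_mult_diag: "mat_unit i j ** diag_mat f = f j *\<^sub>R mat_unit i j"
  by (simp add: diag_mat_def mat_unit_def matrix_matrix_mult_def vec_eq_iff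
      mult_if_zero sum_if_eq_conj)

lemma mat_unit_mult: "mat_unit i j ** mat_unit k l = (if j = k then mat_unit i l else 0)"
  by (simp add: mat_unit_def matrix_matrix_mult_def vec_eq_iff mult_if_zero sum_if_eq_conj)

lemma frob_inner_mat_unit: "frob_inner A (mat_unit i j) = A $ i $ j"
  by (simp add: frob_inner_eq_sum mat_unit_def mult_if_zero sum_if_eq_conj)

lemma quadratic_form_diag_mat: "x \<bullet> (diag_mat f *v x) = (\<Sum>i\<in>UNIV. f i * (x $ i)^2)"
  by (simp add: diag_mat_def matrix_vector_mult_def inner_vec_def mult_if_zero
      power2_eq_square mult_ac)

lemma quadratic_form_mat_unit: "x \<bullet> (mat_unit i j *v x) = x $ i * x $ j"
  by (simp add: mat_unit_def matrix_vector_mult_def inner_vec_def mult_if_zero sum_if_eq_conj)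

lemma quadratic_form_diag_plus_sym_unit:
  "x \<bullet> ((diag_mat f + c *\<^sub>R sym_unit i j) *v x)
    = (\<Sum>k\<in>UNIV. f k * (x $ k)^2) + 2 * c * x $ i * x $ j"
  by (simp add: sym_unit_def matrix_vector_mult_add_rdistrib scaleR_matrix_vector_assoc[symmetric]
      inner_add_right quadratic_form_diag_mat quadratic_form_mat_unit)

lemma sym_mat_diag_plus_sym_unit: "sym_mat (diag_mat f + c *\<^sub>R sym_unit i j)"
  by (auto simp: sym_mat_def diag_mat_def sym_unit_def mat_unit_def transpose_def vec_eq_iff)

lemma pos_def_diag_mat_iff: "pos_def (diag_mat f) \<longleftrightarrow> (\<forall>i. 0 < f i)"
proof
  assume pos: "pos_def (diag_mat f)"
  show "\<forall>i. 0 < f i"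
  proof
    fix i
    have "0 < axis i 1 \<bullet> (diag_mat f *v axis i (1::real))"
      using pos by (simp add: pos_def_def)
    then show "0 < f i"
      by (simp add: quadratic_form_diag_mat axis_def power2_eq_square mult_if_zero)
  qed
next
  assume f: "\<forall>i. 0 < f i"
  have "sym_mat (diag_mat f)"
    using sym_mat_diag_plus_sym_unit[of f 0] by simp
  moreover have "0 < x \<bullet> (diag_mat f *v x)" if "x \<noteq> 0" for x
  proof -
    obtain k where "x $ k \<noteq> 0" using \<open>x \<noteq> 0\<close> by (metis vec_eq_iff zero_index)
    then have "0 < f k * (x $ k)^2" using f by simp
    also have "\<dots> \<le> (\<Sum>i\<in>UNIV. f i * (x $ i)^2)"
      by (rule member_le_sum) (use f in \<open>auto simp: less_imp_le\<close>)
    finally show ?thesis by (simp add: quadratic_form_diag_mat)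
  qed
  ultimately show "pos_def (diag_mat f)" by (simp add: pos_def_def)
qed

lemma diag_mat_add_unit: "diag_mat f + c *\<^sub>R mat_unit i i = diag_mat (f(i := f i + c))"
  by (simp add: diag_mat_def mat_unit_def vec_eq_iff)

lemma diag_plus_sym_unit_inverse:
  fixes f :: "'n::finite \<Rightarrow> real"
  assumes ij: "i \<noteq> j" and f: "\<And>k. f k \<noteq> 0" and D: "D = f i * f j - c^2" "D \<noteq> 0"
  defines "g \<equiv> \<lambda>k. if k = i then f j / D else if k = j then f i / D else 1 / f k"
  shows "(diag_mat f + c *\<^sub>R sym_unit i j) ** (diag_mat g + (- c / D) *\<^sub>R sym_unit i j) = mat 1"
proof -
  define e where "e = - c / D"
  have diag: "f i * g i + c * e = 1" "f j * g j + c * e = 1"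
    using ij f D by (simp_all add: g_def e_def field_simps power2_eq_square)
  have diag_rest: "f k * g k = 1" if "k \<noteq> i" "k \<noteq> j" for k
    using f that by (simp add: g_def)
  have offdiag: "e * f i + c * g j = 0" "e * f j + c * g i = 0"
    using ij D by (simp_all add: g_def e_def field_simps)
  have "(diag_mat f + c *\<^sub>R sym_unit i j) ** (diag_mat g + e *\<^sub>R sym_unit i j)
    = diag_mat (\<lambda>k. f k * g k) + (e * f i + c * g j) *\<^sub>R mat_unit i j
      + (e * f j + c * g i) *\<^sub>R mat_unit j i + (c * e) *\<^sub>R (mat_unit i i + mat_unit j j)"
    using ij by (simp add: sym_unit_def matrix_add_ldistrib matrix_add_rdistrib matrix_scalar_ac
        scalar_matrix_assoc[symmetric] diag_mat_mult diag_mat_mult_unit mat_unit_mult_diag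
        mat_unit_mult algebra_simps)
  also have "\<dots> = mat 1"
    using diag diag_rest offdiag ij by (auto simp: diag_mat_def mat_unit_def mat_def vec_eq_iff)
  finally show ?thesis by (simp add: e_def)
qed

lemma pos_def_diag_plus_sym_unit:
  fixes f :: "'n::finite \<Rightarrow> real"
  assumes ij: "i \<noteq> j" and f: "\<And>k. 0 < f k" and c: "c^2 < f i * f j"
  shows "pos_def (diag_mat f + c *\<^sub>R sym_unit i j)"
  unfolding pos_def_def
proof (intro conjI allI impI sym_mat_diag_plus_sym_unit)
  fix x :: "real^'n" assume "x \<noteq> 0"
  define rest where "rest = (\<Sum>k\<in>UNIV - {i, j}. f k * (x $ k)^2)"
  define block where "block = f i * (x $ i)^2 + f j * (x $ j)^2 + 2 * c * x $ i * x $ j"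
  have split: "x \<bullet> ((diag_mat f + c *\<^sub>R sym_unit i j) *v x) = rest + block"
    using ij by (simp add: quadratic_form_diag_plus_sym_unit rest_def block_def
        sum.subset_diff[of "{i, j}" UNIV])
  have rest_nonneg: "0 \<le> rest"
    unfolding rest_def by (intro sum_nonneg) (simp add: f less_imp_le)
  have square: "f i * block = (f i * x $ i + c * x $ j)^2 + (f i * f j - c^2) * (x $ j)^2"
    by (simp add: block_def power2_eq_square algebra_simps)
  have "0 \<le> f i * block"
    unfolding square using c by (intro add_nonneg_nonneg mult_nonneg_nonneg) auto
  then have block_nonneg: "0 \<le> block"
    using f[of i] by (simp add: zero_le_mult_iff)
  show "0 < x \<bullet> ((diag_mat f + c *\<^sub>R sym_unit i j) *v x)"
  proof (cases "x $ i = 0 \<and> x $ j = 0")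
    case True
    obtain k where k: "x $ k \<noteq> 0" using \<open>x \<noteq> 0\<close> by (metis vec_eq_iff zero_index)
    with True have "k \<in> UNIV - {i, j}" by auto
    then have "0 < f k * (x $ k)^2 \<and> f k * (x $ k)^2 \<le> rest"
      unfolding rest_def using f k
      by (auto intro!: member_le_sum simp: less_imp_le)
    then show ?thesis using split block_nonneg by linarith
  next
    case False
    have "0 < (f i * x $ i + c * x $ j)^2 + (f i * f j - c^2) * (x $ j)^2"
    proof (cases "x $ j = 0")
      case True
      with False f[of i] show ?thesis by simp
    next
      case False
      have "0 < (f i * f j - c^2) * (x $ j)^2" using c False by simp
      then show ?thesis by (simp add: add_nonneg_pos)
    qed
    then have "0 < block" using square f[of i] by (metis zero_less_mult_iff less_asym)
    then show ?thesis using split rest_nonneg by linarith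
  qed
qed

section \<open>The eigenframe\<close>

definition frame_mat :: "('n::finite \<Rightarrow> real^'n) \<Rightarrow> real^'n^'n" where
  "frame_mat u = (\<chi> r c. u c $ r)"

lemma outer_eq_orth_conj: "outer (u i) (u j) = orth_conj (frame_mat u) (mat_unit i j)"
  by (simp add: outer_def orth_conj_def frame_mat_def mat_unit_def vec_eq_iff
      matrix_matrix_mult_def transpose_def mult_if_zero sum_if_eq_conj cong: if_cong)

lemma spectral_sum_eq_orth_conj:
  "(\<Sum>i\<in>UNIV. mu i *\<^sub>R outer (u i) (u i)) = orth_conj (frame_mat u) (diag_mat mu)"
  by (simp add: orth_conj_def diag_mat_def frame_mat_def outer_def vec_eq_iff
      matrix_matrix_mult_def transpose_def mult_if_zero sum_component mult.assoc mult.left_commute)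

lemma frame_coordinates:
  "orth_conj (transpose (frame_mat u)) L $ i $ j = u i \<bullet> (L *v u j)"
proof -
  have "orth_conj (transpose (frame_mat u)) L $ i $ j
      = (\<Sum>k\<in>UNIV. \<Sum>a\<in>UNIV. u i $ a * (L $ a $ k * u j $ k))"
    by (simp add: orth_conj_def matrix_matrix_mult_def transpose_def frame_mat_def
        sum_distrib_right mult.assoc)
  also have "\<dots> = (\<Sum>a\<in>UNIV. \<Sum>k\<in>UNIV. u i $ a * (L $ a $ k * u j $ k))"
    by (rule sum.swap)
  also have "\<dots> = u i \<bullet> (L *v u j)"
    by (simp add: inner_vec_def matrix_vector_mult_def sum_distrib_left)
  finally show ?thesis .
qed

lemma quadratic_form_abs_le_spec_norm:
  assumes "norm w = 1"
  shows "\<bar>w \<bullet> (L *v w)\<bar> \<le> spec_norm L"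
proof -
  have "\<bar>w \<bullet> (L *v w)\<bar> \<le> norm w * norm (L *v w)" by (rule Cauchy_Schwarz_ineq2)
  also have "\<dots> \<le> onorm ((*v) L) * norm w"
    using assms onorm[of "(*v) L" w] by simp
  finally show ?thesis using assms by (simp add: spec_norm_def)
qed

lemma sparse_loss_distinct:
  assumes "sym_mat L" and "s \<in> {-1, 1}" and "i \<noteq> j"
  shows "sparse_w u i j s \<bullet> (L *v sparse_w u i j s)
     = (u i \<bullet> (L *v u i) + u j \<bullet> (L *v u j)) / 2 + s * (u i \<bullet> (L *v u j))"
proof -
  have "s * s = 1" using assms(2) by auto
  moreover have "u j \<bullet> (L *v u i) = u i \<bullet> (L *v u j)"
    using assms(1) by (metis dot_lmul_matrix inner_commute sym_mat_def transpose_matrix_vector)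
  ultimately show ?thesis
    using assms(3) by (simp add: sparse_w_def inner_add_left inner_add_right
        matrix_vector_mult_scaleR matrix_vector_right_distrib algebra_simps)
qed

lemma sparse_Lt_same:
  "sparse_Lt u lam L i i s
     = (u i \<bullet> (L *v u i) / (lam i)^2) *\<^sub>R orth_conj (frame_mat u) (mat_unit i i)"
  by (simp add: sparse_Lt_def sparse_w_def Let_def outer_eq_orth_conj)

lemma sparse_Lt_distinct:
  "i \<noteq> j \<Longrightarrow> sparse_Lt u lam L i j s =
     (s * (sparse_w u i j s \<bullet> (L *v sparse_w u i j s)) / (2 * lam i * lam j))
       *\<^sub>R orth_conj (frame_mat u) (sym_unit i j)"
  by (simp add: sparse_Lt_def Let_def outer_eq_orth_conj sym_unit_def orth_conj_add)

locale orthonormal_frame =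
  fixes u :: "'n::finite \<Rightarrow> real^'n"
  assumes orthonormal: "u i \<bullet> u j = (if i = j then 1 else 0)"
begin

lemma orthogonal_frame_mat: "orthogonal_matrix (frame_mat u)"
  unfolding orthogonal_matrix
  using orthonormal by (simp add: vec_eq_iff matrix_matrix_mult_def transpose_def frame_mat_def
      mat_def inner_vec_def)

lemma frob_norm_square_coordinates:
  "(frob_norm L)^2 = (\<Sum>i\<in>UNIV. \<Sum>j\<in>UNIV. (u i \<bullet> (L *v u j))^2)"
proof -
  have "L = orth_conj (frame_mat u) (orth_conj (transpose (frame_mat u)) L)"
    by (simp add: orth_conj_transpose_cancel orthogonal_frame_mat)
  then have "frob_norm L = frob_norm (orth_conj (transpose (frame_mat u)) L)"
    by (metis frob_norm_orth_conj orthogonal_frame_mat)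
  then show ?thesis by (simp add: frob_norm_square frame_coordinates)
qed

lemma norm_sparse_w:
  assumes "s \<in> {-1, 1}"
  shows "norm (sparse_w u i j s) = 1"
proof -
  have "s * s = 1" using assms by auto
  then have "sparse_w u i j s \<bullet> sparse_w u i j s = 1"
    using orthonormal by (simp add: sparse_w_def inner_add_left inner_add_right algebra_simps)
  then show ?thesis by (simp add: norm_eq_sqrt_inner)
qed

lemma sparse_loss_abs_le:
  assumes "s \<in> {-1, 1}" and "spec_norm L \<le> 1"
  shows "\<bar>sparse_w u i j s \<bullet> (L *v sparse_w u i j s)\<bar> \<le> 1"
  using quadratic_form_abs_le_spec_norm[OF norm_sparse_w[OF assms(1), of i j], of L] assms(2)
  by linarith

end

section \<open>Scalar estimates\<close>

lemma samp_prob_bounds: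
  fixes eta :: real and mu :: "'n::finite \<Rightarrow> real"
  assumes eta: "0 < eta" and small: "eta * real CARD('n) \<le> 1/2" and mu: "0 < mu i"
  shows "mu i \<le> 2 * samp_prob eta mu i" and "2 * eta * mu i \<le> (samp_prob eta mu i)^2"
proof -
  define a where "a = (1 - eta * real CARD('n)) * mu i"
  have lam: "samp_prob eta mu i = a + eta"
    by (simp add: samp_prob_def a_def)
  have "(1/2) * mu i \<le> a"
    unfolding a_def using small mu by (intro mult_right_mono) auto
  then show "mu i \<le> 2 * samp_prob eta mu i"
    using eta by (simp add: lam)
  have "2 * eta * mu i \<le> 4 * a * eta"
    using \<open>(1/2) * mu i \<le> a\<close> eta by (simp add: mult.commute)
  also have "\<dots> \<le> (a + eta)^2"
    using zero_le_power2[of "a - eta"] by (simp add: power2_eq_square algebra_simps)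
  finally show "2 * eta * mu i \<le> (samp_prob eta mu i)^2"
    by (simp add: lam)
qed

text \<open>
  In eigencoordinates the update \<open>W\<^sup>-\<^sup>1 + \<eta> k E\<^sub>i\<^sub>i\<close> only changes the \<open>i\<close>-th eigenvalue
  \<open>mu\<close> of \<open>W\<close> into \<open>1 / (1 / mu + \<eta> k)\<close>, and the round gap is \<open>k\<close> times the difference.
\<close>

lemma rank_one_update_bound:
  fixes eta mu lam l :: real
  assumes eta: "0 < eta" and mu: "0 < mu" "mu \<le> 2 * lam" "2 * eta * mu \<le> lam^2"
    and l: "\<bar>l\<bar> \<le> 1"
  defines "k \<equiv> l / lam^2"
  shows "0 < 1 / mu + eta * k" and "lam^2 * (k * (mu - 1 / (1 / mu + eta * k))) \<le> 8 * eta * l^2"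
proof -
  have lam2: "0 < lam^2" using eta mu by (smt (verit) mult_pos_pos)
  define x where "x = eta * mu * k"
  have "\<bar>eta * mu * l\<bar> \<le> eta * mu"
    using eta mu l by (simp add: abs_mult mult_left_le)
  then have "\<bar>x\<bar> \<le> 1/2"
    using lam2 mu by (simp add: x_def k_def abs_div field_simps)
  then have x: "1/2 \<le> 1 + x" by linarith
  have update: "1 / mu + eta * k = (1 + x) / mu"
    using mu by (simp add: x_def field_simps)
  then show "0 < 1 / mu + eta * k" using x mu by simp
  have "1 + x \<noteq> 0" using x by linarith
  then have "mu - 1 / (1 / mu + eta * k) = mu * x / (1 + x)"
    using mu unfolding update by (simp add: field_simps)
  then have "lam^2 * (k * (mu - 1 / (1 / mu + eta * k))) = l * mu * x / (1 + x)"
    using lam2 by (simp add: k_def)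
  also have "\<dots> = eta * mu^2 * l^2 / (lam^2 * (1 + x))"
    using lam2 by (simp add: x_def k_def power2_eq_square)
  also have "\<dots> \<le> eta * mu^2 * l^2 / (lam^2 * (1/2))"
    using x lam2 eta by (intro divide_left_mono mult_left_mono mult_pos_pos) auto
  also have "\<dots> = 2 * eta * l^2 * (mu^2 / lam^2)"
    using lam2 by (simp add: field_simps)
  also have "\<dots> \<le> 2 * eta * l^2 * 4"
  proof -
    have "mu^2 \<le> (2 * lam)^2" using mu by (intro power_mono) auto
    then have "mu^2 / lam^2 \<le> 4" using lam2 by (simp add: field_simps power_mult_distrib)
    then show ?thesis using eta by (intro mult_left_mono) auto
  qed
  finally show "lam^2 * (k * (mu - 1 / (1 / mu + eta * k))) \<le> 8 * eta * l^2" by simp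
qed

text \<open>
  For \<open>i \<noteq> j\<close> the update \<open>W\<^sup>-\<^sup>1 + \<eta> c\<^sub>0 (E\<^sub>i\<^sub>j + E\<^sub>j\<^sub>i)\<close> is a 2\<times>2 block
  \<open>[1/mu1, c; c, 1/mu2]\<close> with determinant \<open>D\<close>; the off-diagonal entries of its inverse are
  \<open>-c / D\<close>, which makes the round gap \<open>c\<^sub>0 \<cdot> 2c / D\<close>.
\<close>

lemma rank_two_update_bound:
  fixes eta mu1 mu2 lam1 lam2 l c0 :: real
  assumes eta: "0 < eta"
    and mu1: "0 < mu1" "mu1 \<le> 2 * lam1" "2 * eta * mu1 \<le> lam1^2"
    and mu2: "0 < mu2" "mu2 \<le> 2 * lam2" "2 * eta * mu2 \<le> lam2^2"
    and l: "\<bar>l\<bar> \<le> 1" and c0: "c0^2 = l^2 / (2 * lam1 * lam2)^2"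
  defines "c \<equiv> eta * c0" and "D \<equiv> 1 / mu1 * (1 / mu2) - (eta * c0)^2"
  shows "c^2 < 1 / mu1 * (1 / mu2)" and "lam1 * lam2 * (c0 * (2 * c / D)) \<le> 4 * eta * l^2"
proof -
  have lam: "0 < lam1" "0 < lam2" using mu1 mu2 by linarith+
  have "l^2 \<le> 1" using l abs_square_le_1 by blast
  have "c^2 = eta^2 * l^2 / (4 * (lam1^2 * lam2^2))"
    by (simp add: c_def c0 power_mult_distrib)
  also have "\<dots> \<le> eta^2 / (4 * ((2 * eta * mu1) * (2 * eta * mu2)))"
    using \<open>l^2 \<le> 1\<close> eta mu1 mu2
    by (intro frac_le mult_left_mono mult_mono mult_pos_pos) (auto simp: mult_left_le)
  also have "\<dots> = 1 / mu1 * (1 / mu2) / 16"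
    using eta by (simp add: field_simps power2_eq_square)
  finally have c_small: "c^2 \<le> 1 / mu1 * (1 / mu2) / 16" .
  also have "\<dots> < 1 / mu1 * (1 / mu2)" using mu1 mu2 by (simp add: field_simps)
  finally show "c^2 < 1 / mu1 * (1 / mu2)" .
  have D: "15/16 * (1 / mu1 * (1 / mu2)) \<le> D"
    using c_small unfolding D_def c_def by simp
  have D_pos: "0 < D"
    using D mu1 mu2 by (smt (verit) divide_pos_pos mult_pos_pos)
  have "mu1 * mu2 / 4 \<le> lam1 * lam2"
    using mu1 mu2 mult_mono[of mu1 "2 * lam1" mu2 "2 * lam2"] by simp
  then have "2 * (mu1 * mu2 / 4) * (15/16 * (1 / mu1 * (1 / mu2))) \<le> 2 * (lam1 * lam2) * D"
    using D mu1 mu2 by (intro mult_left_mono mult_mono) auto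
  then have den: "15/32 \<le> 2 * lam1 * lam2 * D"
    using mu1 mu2 by (simp add: field_simps)
  have "lam1 * lam2 * (c0 * (2 * c / D)) = 2 * eta * lam1 * lam2 * c0^2 / D"
    by (simp add: c_def power2_eq_square)
  also have "\<dots> = eta * l^2 / (2 * lam1 * lam2 * D)"
    unfolding c0 using lam D_pos by (simp add: power_mult_distrib power2_eq_square field_simps)
  also have "\<dots> \<le> eta * l^2 / (15/32)"
    using den eta lam D_pos by (intro divide_left_mono) auto
  also have "\<dots> \<le> 4 * eta * l^2"
    using eta by simp
  finally show "lam1 * lam2 * (c0 * (2 * c / D)) \<le> 4 * eta * l^2" .
qed

section \<open>One round of sparse sampling\<close>

lemma sparse_expect_le:
  fixes lam :: "'n::finite \<Rightarrow> real" and m :: "'n \<Rightarrow> 'n \<Rightarrow> real"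
  assumes eta: "0 \<le> eta"
    and term_le: "\<And>i j. lam i * lam j * (if i = j then F i j 1 else (F i j 1 + F i j (-1)) / 2)
        \<le> 4 * eta * ((m i i)^2 + (m j j)^2) + 4 * eta * (if i = j then 0 else (m i j)^2)"
  shows "sparse_expect lam F \<le> 8 * eta * real CARD('n) * (\<Sum>i\<in>UNIV. \<Sum>j\<in>UNIV. (m i j)^2)"
proof -
  define A where "A = (\<Sum>i\<in>UNIV. (m i i)^2)"
  define B where "B = (\<Sum>i\<in>UNIV. \<Sum>j\<in>UNIV. if i = j then 0 else (m i j)^2)"
  have "(\<Sum>j\<in>UNIV. (m i j)^2) = (m i i)^2 + (\<Sum>j\<in>UNIV. if i = j then 0 else (m i j)^2)" for i
  proof -
    have "(\<Sum>j\<in>UNIV. (m i j)^2)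
        = (\<Sum>j\<in>UNIV. (if i = j then (m i j)^2 else 0) + (if i = j then 0 else (m i j)^2))"
      by (rule sum.cong) auto
    then show ?thesis by (simp add: sum.distrib)
  qed
  then have total: "(\<Sum>i\<in>UNIV. \<Sum>j\<in>UNIV. (m i j)^2) = A + B"
    by (simp add: A_def B_def sum.distrib)
  have "sparse_expect lam F
      \<le> (\<Sum>i\<in>UNIV. \<Sum>j\<in>UNIV. 4 * eta * ((m i i)^2 + (m j j)^2)
          + 4 * eta * (if i = j then 0 else (m i j)^2))"
    unfolding sparse_expect_def by (intro sum_mono term_le)
  also have "\<dots> = 8 * eta * real CARD('n) * A + 4 * eta * B"
    by (simp add: A_def B_def sum.distrib sum_distrib_left algebra_simps)
  also have "\<dots> \<le> 8 * eta * real CARD('n) * A + 8 * eta * real CARD('n) * B"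
  proof -
    have "0 < CARD('n)" by simp
    then have "1 \<le> 2 * real CARD('n)" by linarith
    then have "4 * eta * 1 \<le> 4 * eta * (2 * real CARD('n))"
      using eta by (intro mult_left_mono) simp_all
    moreover have "0 \<le> B" unfolding B_def by (intro sum_nonneg) auto
    ultimately have "4 * eta * B \<le> 8 * eta * real CARD('n) * B"
      using mult_right_mono[of "4 * eta" "8 * eta * real CARD('n)" B] by simp
    then show ?thesis by simp
  qed
  finally show ?thesis by (simp add: total algebra_simps)
qed

text \<open>
  The sampling probabilities \<open>lam\<close> enter the analysis of a round only through the two
  inequalities relating them to the eigenvalues \<open>mu\<close>.
\<close>

locale sparse_round = orthonormal_frame u for u :: "'n::finite \<Rightarrow> real^'n" +
  fixes mu lam :: "'n \<Rightarrow> real" and eta :: real and L :: "real^'n^'n"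
  assumes mu_pos: "0 < mu i"
    and eta_pos: "0 < eta"
    and mu_le_lam: "mu i \<le> 2 * lam i"
    and eta_mu_le_lam: "2 * eta * mu i \<le> (lam i)^2"
    and sym_L: "sym_mat L"
    and spec_norm_L: "spec_norm L \<le> 1"
begin

lemma diag_mu_inverse: "diag_mat mu ** diag_mat (\<lambda>i. 1 / mu i) = mat 1"
  by (rule diag_mat_mult_inverse) (metis mu_pos less_irrefl)

lemma round_same_index:
  fixes i :: 'n and s :: real
  assumes s: "s \<in> {-1, 1}"
  defines "W \<equiv> orth_conj (frame_mat u) (diag_mat mu)" and "Lt \<equiv> sparse_Lt u lam L i i s"
  shows "pos_def (matrix_inv W + eta *\<^sub>R Lt)"
    and "(lam i)^2 * round_gap W eta Lt \<le> 8 * eta * (u i \<bullet> (L *v u i))^2"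
proof -
  define l where "l = u i \<bullet> (L *v u i)"
  define k where "k = l / (lam i)^2"
  have "\<bar>l\<bar> \<le> 1"
    using sparse_loss_abs_le[OF s spec_norm_L, of i i] by (simp add: l_def sparse_w_def)
  note bound = rank_one_update_bound[OF eta_pos mu_pos mu_le_lam eta_mu_le_lam this]
  define a where "a = (\<lambda>j. 1 / mu j)(i := 1 / mu i + eta * k)"
  have a_pos: "0 < a j" for j
    using bound(1) mu_pos by (simp add: a_def k_def)
  have update: "diag_mat (\<lambda>j. 1 / mu j) + eta *\<^sub>R (k *\<^sub>R mat_unit i i) = diag_mat a"
    by (simp add: a_def diag_mat_add_unit)
  have Lt: "Lt = orth_conj (frame_mat u) (k *\<^sub>R mat_unit i i)"
    by (simp add: Lt_def sparse_Lt_same orth_conj_scaleR k_def l_def)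
  show "pos_def (matrix_inv W + eta *\<^sub>R Lt)"
    unfolding W_def Lt orth_conj_inverse_update[OF orthogonal_frame_mat diag_mu_inverse] update
    by (simp add: pos_def_orth_conj_iff[OF orthogonal_frame_mat] pos_def_diag_mat_iff a_pos)
  have inv: "(diag_mat (\<lambda>j. 1 / mu j) + eta *\<^sub>R (k *\<^sub>R mat_unit i i))
      ** diag_mat (\<lambda>j. 1 / a j) = mat 1"
    unfolding update by (rule diag_mat_mult_inverse) (metis a_pos less_irrefl)
  have "round_gap W eta Lt = k * (mu i - 1 / a i)"
    unfolding W_def Lt round_gap_orth_conj[OF orthogonal_frame_mat diag_mu_inverse inv]
    by (simp add: frob_inner_scaleR_right frob_inner_mat_unit diag_mat_def)
  then show "(lam i)^2 * round_gap W eta Lt \<le> 8 * eta * (u i \<bullet> (L *v u i))^2"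
    using bound(2) by (simp add: a_def k_def l_def)
qed

lemma round_distinct_index:
  fixes i j :: 'n and s :: real
  assumes s: "s \<in> {-1, 1}" and ij: "i \<noteq> j"
  defines "W \<equiv> orth_conj (frame_mat u) (diag_mat mu)" and "Lt \<equiv> sparse_Lt u lam L i j s"
  shows "pos_def (matrix_inv W + eta *\<^sub>R Lt)"
    and "lam i * lam j * round_gap W eta Lt
      \<le> 4 * eta * (sparse_w u i j s \<bullet> (L *v sparse_w u i j s))^2"
proof -
  define l where "l = sparse_w u i j s \<bullet> (L *v sparse_w u i j s)"
  define c0 where "c0 = s * l / (2 * lam i * lam j)"
  have l: "\<bar>l\<bar> \<le> 1"
    using sparse_loss_abs_le[OF s spec_norm_L] by (simp add: l_def)
  have "c0^2 = l^2 / (2 * lam i * lam j)^2"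
    using s by (auto simp: c0_def power_divide power_mult_distrib)
  note bound = rank_two_update_bound[OF eta_pos mu_pos mu_le_lam eta_mu_le_lam
      mu_pos mu_le_lam eta_mu_le_lam l this]
  define f where "f = (\<lambda>k. 1 / mu k)"
  define D where "D = f i * f j - (eta * c0)^2"
  define g where "g = (\<lambda>k. if k = i then f j / D else if k = j then f i / D else 1 / f k)"
  have D_pos: "0 < D"
    using bound(1) by (simp add: D_def f_def)
  have update: "diag_mat f + eta *\<^sub>R (c0 *\<^sub>R sym_unit i j) = diag_mat f + (eta * c0) *\<^sub>R sym_unit i j"
    by simp
  have Lt: "Lt = orth_conj (frame_mat u) (c0 *\<^sub>R sym_unit i j)"
    by (simp add: Lt_def sparse_Lt_distinct[OF ij] orth_conj_scaleR c0_def l_def)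
  show "pos_def (matrix_inv W + eta *\<^sub>R Lt)"
    unfolding W_def Lt orth_conj_inverse_update[OF orthogonal_frame_mat diag_mu_inverse]
      f_def[symmetric] update pos_def_orth_conj_iff[OF orthogonal_frame_mat]
    by (rule pos_def_diag_plus_sym_unit[OF ij]) (use mu_pos bound(1) in \<open>simp_all add: f_def\<close>)
  have inv: "(diag_mat f + eta *\<^sub>R (c0 *\<^sub>R sym_unit i j))
      ** (diag_mat g + (- (eta * c0) / D) *\<^sub>R sym_unit i j) = mat 1"
    unfolding update g_def
    by (rule diag_plus_sym_unit_inverse[OF ij _ D_def])
      (use mu_pos D_pos in \<open>simp_all add: f_def less_imp_neq[symmetric]\<close>)
  have "round_gap W eta Lt = c0 * (2 * (eta * c0) / D)"
    unfolding W_def Lt round_gap_orth_conj[OF orthogonal_frame_mat diag_mu_inverse[folded f_def] inv]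
    unfolding frob_inner_scaleR_right sym_unit_def frob_inner_add_right frob_inner_mat_unit
    using ij by (simp add: diag_mat_def mat_unit_def)
  then show "lam i * lam j * round_gap W eta Lt
      \<le> 4 * eta * (sparse_w u i j s \<bullet> (L *v sparse_w u i j s))^2"
    using bound(2) by (simp add: D_def f_def l_def)
qed

lemma averaged_round_gap_le:
  fixes i j :: 'n
  defines "G \<equiv> \<lambda>i j s.
      round_gap (orth_conj (frame_mat u) (diag_mat mu)) eta (sparse_Lt u lam L i j s)"
    and "m \<equiv> \<lambda>i j. u i \<bullet> (L *v u j)"
  shows "lam i * lam j * (if i = j then G i j 1 else (G i j 1 + G i j (-1)) / 2)
    \<le> 4 * eta * ((m i i)^2 + (m j j)^2) + 4 * eta * (if i = j then 0 else (m i j)^2)"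
proof (cases "i = j")
  case True
  then show ?thesis
    using round_same_index(2)[of 1 i] by (simp add: G_def m_def power2_eq_square)
next
  case False
  define a where "a = (m i i + m j j) / 2"
  have sign: "lam i * lam j * G i j s \<le> 4 * eta * (a + s * m i j)^2" if "s \<in> {-1, 1}" for s
    using round_distinct_index(2)[OF that False] sparse_loss_distinct[OF sym_L that False]
    by (simp add: G_def m_def a_def)
  have "(2 * a)^2 \<le> 2 * ((m i i)^2 + (m j j)^2)"
  proof -
    have "(2 * a)^2 + (m i i - m j j)^2 = 2 * ((m i i)^2 + (m j j)^2)"
      by (simp add: a_def power2_eq_square algebra_simps)
    then show ?thesis using zero_le_power2[of "m i i - m j j"] by linarith
  qed
  then have "4 * a^2 \<le> 2 * ((m i i)^2 + (m j j)^2)"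
    by (simp add: power_mult_distrib)
  then have "a^2 \<le> (m i i)^2 + (m j j)^2"
    using zero_le_power2[of "m i i"] zero_le_power2[of "m j j"] by (smt (verit))
  moreover have "((a + m i j)^2 + (a - m i j)^2) / 2 = a^2 + (m i j)^2"
    by (simp add: power2_eq_square algebra_simps)
  ultimately have "((a + m i j)^2 + (a - m i j)^2) / 2 \<le> (m i i)^2 + (m j j)^2 + (m i j)^2"
    by linarith
  then have "4 * eta * (((a + m i j)^2 + (a - m i j)^2) / 2)
      \<le> 4 * eta * ((m i i)^2 + (m j j)^2 + (m i j)^2)"
    using eta_pos by (intro mult_left_mono) auto
  moreover have "lam i * lam j * ((G i j 1 + G i j (-1)) / 2)
      \<le> 4 * eta * (((a + m i j)^2 + (a - m i j)^2) / 2)"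
    using sign[of 1] sign[of "-1"] by (simp add: field_simps)
  ultimately show ?thesis using False by (simp add: algebra_simps)
qed

end

theorem lemma5:
  fixes W L :: "real^'n^'n" and u :: "'n \<Rightarrow> real^'n" and mu :: "'n \<Rightarrow> real" and eta :: real
  assumes "CARD('n) \<ge> 2"
    and "0 < eta" and "eta \<le> 1 / (2 * real CARD('n))"
    and "pos_def W" and "trace W = 1"
    and "\<forall>i j. u i \<bullet> u j = (if i = j then 1 else 0)"
    and "W = (\<Sum>i\<in>UNIV. mu i *\<^sub>R outer (u i) (u i))"
    and "sym_mat L" and "spec_norm L \<le> 1"
  shows "(\<forall>I J s. s \<in> {-1, 1} \<longrightarrow>
            pos_def (matrix_inv W + eta *\<^sub>R sparse_Lt u (samp_prob eta mu) L I J s))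
      \<and> sparse_expect (samp_prob eta mu)
          (\<lambda>I J s. frob_inner
             (W - matrix_inv (matrix_inv W + eta *\<^sub>R sparse_Lt u (samp_prob eta mu) L I J s))
             (sparse_Lt u (samp_prob eta mu) L I J s))
        \<le> 8 * eta * real CARD('n) * (frob_norm L)^2"
proof -
  interpret orthonormal_frame u
    using assms(6) by unfold_locales simp
  have W: "W = orth_conj (frame_mat u) (diag_mat mu)"
    using assms(7) by (simp add: spectral_sum_eq_orth_conj)
  have mu_pos: "0 < mu i" for i
    using assms(4)
    by (simp add: W pos_def_orth_conj_iff[OF orthogonal_frame_mat] pos_def_diag_mat_iff)
  have "eta * real CARD('n) \<le> 1/2"
    using assms(3) by (simp add: field_simps)
  note lam_bounds = samp_prob_bounds[OF assms(2) this mu_pos]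
  interpret sparse_round u mu "samp_prob eta mu" eta L
    using mu_pos lam_bounds assms(2,8,9) by unfold_locales auto
  show ?thesis
  proof (intro conjI allI impI)
    fix I J and s :: real assume "s \<in> {-1, 1}"
    then show "pos_def (matrix_inv W + eta *\<^sub>R sparse_Lt u (samp_prob eta mu) L I J s)"
      unfolding W using round_same_index(1) round_distinct_index(1) by (cases "I = J") auto
  next
    show "sparse_expect (samp_prob eta mu) (\<lambda>I J s. frob_inner
             (W - matrix_inv (matrix_inv W + eta *\<^sub>R sparse_Lt u (samp_prob eta mu) L I J s))
             (sparse_Lt u (samp_prob eta mu) L I J s))
        \<le> 8 * eta * real CARD('n) * (frob_norm L)^2"
      unfolding round_gap_def[symmetric] W frob_norm_square_coordinates
      by (rule sparse_expect_le[OF less_imp_le[OF assms(2)] averaged_round_gap_le])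
  qed
qed

end
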